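(* Let $\mathcal{A}=\{1,\dots,m\}$, $\mathcal{B}=\{1,\dots,n\}$ and $\phi:\mathcal{A}\times\mathcal{B}\to\mathbb{R}^d$ with $\|\phi(a,b)\|_2\le L$. Let $\mu^*\in\Delta(\mathcal{A}),\nu^*\in\Delta(\mathcal{B})$ with $\min_{a,b}\{\mu^*(a),\nu^*(b)\}\ge\xi>0$, and let $\hat\mu\in\Delta(\mathcal{A}),\hat\nu\in\Delta(\mathcal{B})$ satisfy $\|\hat\mu-\mu^*\|_1\le\epsilon_\mu$ and $\|\hat\nu-\nu^*\|_1\le\epsilon_\nu$ with $\epsilon_\mu<\xi/2$ and $\epsilon_\nu<\xi/2$. Let $\epsilon_N=\epsilon_\mu+\epsilon_\nu$, $\hat X=X(\hat\mu,\hat\nu)$, $X^*=X(\mu^*,\nu^* )$, $\hat y=y(\hat\mu,\hat\nu)$, $y^*=y(\mu^*,\nu^* )$. Then $$\|\hat X-X^*\|_{op}\le C_X\epsilon_N,\qquad\|\hat y-y^*\|_2\le C_Y\epsilon_N,$$ with $C_X=2L\sqrt{m+n}$ and $C_Y=\sqrt{8(m+n)}/\xi$.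
   Context: For full-support $\mu,\nu$: $A(\nu)\in\mathbb{R}^{(m-1)\times d}$ has row $a-1$ ($a=2,\dots,m$) equal to $\sum_{b'\in\mathcal{B}}\nu(b')(\phi(a,b')-\phi(1,b'))^\top$; $B(\mu)\in\mathbb{R}^{(n-1)\times d}$ has row $b-1$ ($b=2,\dots,n$) equal to $\sum_{a'\in\mathcal{A}}\mu(a')(\phi(a',1)-\phi(a',b))^\top$; $c(\mu)_{a-1}=\log(\mu(a)/\mu(1))$; $d(\nu)_{b-1}=\log(\nu(b)/\nu(1))$; $X(\mu,\nu)=[A(\nu)^\top,B(\mu)^\top]^\top$ and $y(\mu,\nu)=[c(\mu)^\top,d(\nu)^\top]^\top$. $\|\cdot\|_{op}$ is the spectral norm. In the paper, $\hat\mu,\hat\nu$ are empirical frequency estimates of the QRE $(\mu^*,\nu^* )$ and the hypotheses hold on the high-probability event of the policy-estimation lemma. *)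

theory Defs
  imports "HOL-Analysis.Analysis"
begin

text \<open>Action sets are A = {1..m}, B = {1..n}; features phi a b :: real^'d.
  Policies are functions nat => real (only values on {1..m} resp. {1..n} matter).\<close>

definition is_dist :: "nat \<Rightarrow> (nat \<Rightarrow> real) \<Rightarrow> bool" where
  "is_dist k p \<longleftrightarrow> (\<forall>i\<in>{1..k}. 0 \<le> p i) \<and> (\<Sum>i\<in>{1..k}. p i) = 1"

definition l1_dist :: "nat \<Rightarrow> (nat \<Rightarrow> real) \<Rightarrow> (nat \<Rightarrow> real) \<Rightarrow> real" where
  "l1_dist k p q = (\<Sum>i\<in>{1..k}. \<bar>p i - q i\<bar>)"

definition Arow :: "(nat \<Rightarrow> nat \<Rightarrow> real^'d) \<Rightarrow> nat \<Rightarrow> (nat \<Rightarrow> real) \<Rightarrow> nat \<Rightarrow> real^'d" where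
  "Arow phi n nu a = (\<Sum>b'\<in>{1..n}. nu b' *\<^sub>R (phi a b' - phi 1 b'))"

definition Brow :: "(nat \<Rightarrow> nat \<Rightarrow> real^'d) \<Rightarrow> nat \<Rightarrow> (nat \<Rightarrow> real) \<Rightarrow> nat \<Rightarrow> real^'d" where
  "Brow phi m mu b = (\<Sum>a'\<in>{1..m}. mu a' *\<^sub>R (phi a' 1 - phi a' b))"

text \<open>X(mu,nu): rows indexed 1..(m-1)+(n-1); row i is A-row (a = i+1) for i \<le> m-1,
  otherwise B-row (b = i-(m-1)+1).\<close>
definition Xmat :: "(nat \<Rightarrow> nat \<Rightarrow> real^'d) \<Rightarrow> nat \<Rightarrow> nat \<Rightarrow> (nat \<Rightarrow> real) \<Rightarrow> (nat \<Rightarrow> real) \<Rightarrow> nat \<Rightarrow> real^'d" where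
  "Xmat phi m n mu nu i =
     (if i \<le> m - 1 then Arow phi n nu (i + 1) else Brow phi m mu (i - (m - 1) + 1))"

definition yvec :: "nat \<Rightarrow> (nat \<Rightarrow> real) \<Rightarrow> (nat \<Rightarrow> real) \<Rightarrow> nat \<Rightarrow> real" where
  "yvec m mu nu i =
     (if i \<le> m - 1 then ln (mu (i + 1) / mu 1) else ln (nu (i - (m - 1) + 1) / nu 1))"

definition op_norm_rows :: "nat \<Rightarrow> (nat \<Rightarrow> real^'d) \<Rightarrow> real" where
  "op_norm_rows r M = (SUP v\<in>cball 0 1. sqrt (\<Sum>i\<in>{1..r}. (M i \<bullet> v)\<^sup>2))"

definition vec_norm2 :: "nat \<Rightarrow> (nat \<Rightarrow> real) \<Rightarrow> real" where
  "vec_norm2 r y = sqrt (\<Sum>i\<in>{1..r}. (y i)\<^sup>2)"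

end

theory Submission
  imports Defs
begin

text \<open>Each row of \<open>X\<close> is linear in the opposing policy with coefficients of norm at most \<open>2L\<close>,
  so each row of \<open>X(\<mu>h,\<nu>h) - X(\<mu>*,\<nu>*)\<close> has norm at most \<open>2L \<epsilon>\<^sub>N\<close>.  Each entry of \<open>y\<close> is a
  difference of two logarithms; all probabilities involved are at least \<open>\<xi>/2\<close>, where \<open>ln\<close> is
  \<open>2/\<xi>\<close>-Lipschitz, so each entry of \<open>y(\<mu>h,\<nu>h) - y(\<mu>*,\<nu>*)\<close> is at most \<open>2\<epsilon>\<^sub>N/\<xi>\<close>.  A matrix or
  vector with \<open>r\<close> rows bounded by \<open>K\<close> has norm at most \<open>\<surd>r K\<close>, and \<open>r \<le> m + n\<close>.\<close>

lemma l1_dist_nonneg: "0 \<le> l1_dist k p q"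
  unfolding l1_dist_def by (simp add: sum_nonneg)

lemma abs_diff_le_l1_dist:
  assumes "i \<in> {1..k}"
  shows "\<bar>p i - q i\<bar> \<le> l1_dist k p q"
  unfolding l1_dist_def by (rule member_le_sum) (use assms in auto)

lemma abs_diff_add_abs_diff_le_l1_dist:
  assumes "i \<in> {1..k}" "j \<in> {1..k}" "i \<noteq> j"
  shows "\<bar>p i - q i\<bar> + \<bar>p j - q j\<bar> \<le> l1_dist k p q"
proof -
  have "\<bar>p i - q i\<bar> + \<bar>p j - q j\<bar> = (\<Sum>l\<in>{i, j}. \<bar>p l - q l\<bar>)"
    using assms by simp
  also have "\<dots> \<le> l1_dist k p q"
    unfolding l1_dist_def by (rule sum_mono2) (use assms in auto)
  finally show ?thesis .
qed

lemma norm_sum_scaleR_diff_le: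
  fixes f :: "nat \<Rightarrow> 'a::real_normed_vector"
  assumes "\<forall>b\<in>{1..k}. norm (f b) \<le> K"
  shows "norm ((\<Sum>b\<in>{1..k}. p b *\<^sub>R f b) - (\<Sum>b\<in>{1..k}. q b *\<^sub>R f b)) \<le> K * l1_dist k p q"
proof -
  have "norm ((\<Sum>b\<in>{1..k}. p b *\<^sub>R f b) - (\<Sum>b\<in>{1..k}. q b *\<^sub>R f b))
      = norm (\<Sum>b\<in>{1..k}. (p b - q b) *\<^sub>R f b)"
    by (simp add: scaleR_diff_left sum_subtractf)
  also have "\<dots> \<le> (\<Sum>b\<in>{1..k}. \<bar>p b - q b\<bar> * norm (f b))"
    by (rule norm_sum[THEN order_trans]) simp
  also have "\<dots> \<le> (\<Sum>b\<in>{1..k}. \<bar>p b - q b\<bar> * K)"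
    using assms by (intro sum_mono mult_left_mono) auto
  also have "\<dots> = K * l1_dist k p q"
    unfolding l1_dist_def by (simp add: sum_distrib_left mult.commute)
  finally show ?thesis .
qed

lemma norm_Arow_diff_le:
  fixes phi :: "nat \<Rightarrow> nat \<Rightarrow> real^'d"
  assumes "a \<in> {1..m}" and phi: "\<forall>a\<in>{1..m}. \<forall>b\<in>{1..n}. norm (phi a b) \<le> L"
  shows "norm (Arow phi n \<nu> a - Arow phi n \<nu>' a) \<le> 2 * L * l1_dist n \<nu> \<nu>'"
  unfolding Arow_def
proof (rule norm_sum_scaleR_diff_le, intro ballI)
  fix b assume "b \<in> {1..n}"
  then have "norm (phi a b) \<le> L" "norm (phi 1 b) \<le> L"
    using assms by auto
  then show "norm (phi a b - phi 1 b) \<le> 2 * L"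
    using norm_triangle_ineq4[of "phi a b" "phi 1 b"] by linarith
qed

lemma norm_Brow_diff_le:
  fixes phi :: "nat \<Rightarrow> nat \<Rightarrow> real^'d"
  assumes "b \<in> {1..n}" and phi: "\<forall>a\<in>{1..m}. \<forall>b\<in>{1..n}. norm (phi a b) \<le> L"
  shows "norm (Brow phi m \<mu> b - Brow phi m \<mu>' b) \<le> 2 * L * l1_dist m \<mu> \<mu>'"
  unfolding Brow_def
proof (rule norm_sum_scaleR_diff_le, intro ballI)
  fix a assume "a \<in> {1..m}"
  then have "norm (phi a 1) \<le> L" "norm (phi a b) \<le> L"
    using assms by auto
  then show "norm (phi a 1 - phi a b) \<le> 2 * L"
    using norm_triangle_ineq4[of "phi a 1" "phi a b"] by linarith
qed

lemma norm_Xmat_diff_le: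
  fixes phi :: "nat \<Rightarrow> nat \<Rightarrow> real^'d"
  assumes "m \<ge> 1" "n \<ge> 1" "i \<in> {1..(m - 1) + (n - 1)}"
    and phi: "\<forall>a\<in>{1..m}. \<forall>b\<in>{1..n}. norm (phi a b) \<le> L"
    and "l1_dist m \<mu> \<mu>' \<le> \<epsilon>\<mu>" "l1_dist n \<nu> \<nu>' \<le> \<epsilon>\<nu>"
  shows "norm (Xmat phi m n \<mu> \<nu> i - Xmat phi m n \<mu>' \<nu>' i) \<le> 2 * L * (\<epsilon>\<mu> + \<epsilon>\<nu>)"
proof -
  have "0 \<le> L"
    using phi assms(1,2) by (meson atLeastAtMost_iff le_refl norm_ge_zero order_trans)
  moreover have "0 \<le> \<epsilon>\<mu>" "0 \<le> \<epsilon>\<nu>"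
    using assms(5,6) l1_dist_nonneg order_trans by blast+
  ultimately have \<nu>_le: "2 * L * l1_dist n \<nu> \<nu>' \<le> 2 * L * (\<epsilon>\<mu> + \<epsilon>\<nu>)"
    and \<mu>_le: "2 * L * l1_dist m \<mu> \<mu>' \<le> 2 * L * (\<epsilon>\<mu> + \<epsilon>\<nu>)"
    using assms(5,6) by (intro mult_left_mono; simp)+
  show ?thesis
  proof (cases "i \<le> m - 1")
    case True
    then show ?thesis
      using assms(1) \<nu>_le by (simp add: Xmat_def norm_Arow_diff_le[OF _ phi, THEN order_trans])
  next
    case False
    then show ?thesis
      using assms(3) \<mu>_le by (simp add: Xmat_def norm_Brow_diff_le[OF _ phi, THEN order_trans])
  qed
qed

lemma abs_ln_diff_le:
  fixes x y c :: real
  assumes "0 < c" "c \<le> x" "c \<le> y"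
  shows "\<bar>ln x - ln y\<bar> \<le> \<bar>x - y\<bar> / c"
proof -
  have "ln u - ln v \<le> \<bar>x - y\<bar> / c" if "{u, v} = {x, y}" for u v
  proof -
    have "c \<le> u" "c \<le> v" "\<bar>u - v\<bar> = \<bar>x - y\<bar>"
      using that assms by (auto simp: doubleton_eq_iff abs_minus_commute)
    have "ln u - ln v \<le> (u - v) / v"
      using \<open>c \<le> u\<close> \<open>c \<le> v\<close> assms(1) by (intro ln_diff_le) auto
    also have "\<dots> \<le> \<bar>u - v\<bar> / v"
      using \<open>c \<le> v\<close> assms(1) by (intro divide_right_mono) auto
    also have "\<dots> \<le> \<bar>u - v\<bar> / c"
      using \<open>c \<le> v\<close> assms(1) by (intro divide_left_mono) auto
    finally show ?thesis
      using \<open>\<bar>u - v\<bar> = \<bar>x - y\<bar>\<close> by simp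
  qed
  from this[of x y] this[of y x] show ?thesis
    by (auto simp: insert_commute)
qed

lemma abs_ln_ratio_diff_le:
  fixes p q :: "nat \<Rightarrow> real"
  assumes "a \<in> {1..k}" "\<forall>j\<in>{1..k}. \<xi> \<le> q j" "l1_dist k p q \<le> \<epsilon>" "\<epsilon> < \<xi> / 2"
  shows "\<bar>ln (p a / p 1) - ln (q a / q 1)\<bar> \<le> 2 * \<epsilon> / \<xi>"
proof (cases "a = 1")
  case True
  then show ?thesis
    using assms(3,4) l1_dist_nonneg[of k p q] by simp
next
  case False
  have one: "1 \<in> {1..k}"
    using assms(1) by simp
  have "0 < \<xi>"
    using assms(3,4) l1_dist_nonneg[of k p q] by linarith
  have bounds: "\<xi> / 2 \<le> p j" "\<xi> / 2 \<le> q j" if "j \<in> {1..k}" for j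
    using abs_diff_le_l1_dist[OF that, of p q] assms(2-4) that by force+
  have "\<bar>ln (p a / p 1) - ln (q a / q 1)\<bar>
      = \<bar>(ln (p a) - ln (q a)) - (ln (p 1) - ln (q 1))\<bar>"
    using bounds[OF assms(1)] bounds[OF one] \<open>0 < \<xi>\<close> by (simp add: ln_div)
  also have "\<dots> \<le> \<bar>p a - q a\<bar> / (\<xi> / 2) + \<bar>p 1 - q 1\<bar> / (\<xi> / 2)"
    using abs_ln_diff_le[of "\<xi> / 2", OF _ bounds[OF assms(1)]]
      abs_ln_diff_le[of "\<xi> / 2", OF _ bounds[OF one]] \<open>0 < \<xi>\<close> by linarith
  also have "\<dots> \<le> \<epsilon> / (\<xi> / 2)"
    unfolding add_divide_distrib[symmetric] using \<open>0 < \<xi>\<close>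
    by (intro divide_right_mono order_trans[OF abs_diff_add_abs_diff_le_l1_dist assms(3)])
      (use assms(1) one False in auto)
  finally show ?thesis
    by (simp add: mult.commute)
qed

lemma abs_yvec_diff_le:
  assumes "m \<ge> 1" "n \<ge> 1" "i \<in> {1..(m - 1) + (n - 1)}"
    and "\<forall>a\<in>{1..m}. \<xi> \<le> \<mu>' a" "\<forall>b\<in>{1..n}. \<xi> \<le> \<nu>' b"
    and "l1_dist m \<mu> \<mu>' \<le> \<epsilon>\<mu>" "l1_dist n \<nu> \<nu>' \<le> \<epsilon>\<nu>"
    and "\<epsilon>\<mu> < \<xi> / 2" "\<epsilon>\<nu> < \<xi> / 2"
  shows "\<bar>yvec m \<mu> \<nu> i - yvec m \<mu>' \<nu>' i\<bar> \<le> 2 * (\<epsilon>\<mu> + \<epsilon>\<nu>) / \<xi>"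
proof -
  have "0 \<le> \<epsilon>\<mu>" "0 \<le> \<epsilon>\<nu>"
    using assms(6,7) l1_dist_nonneg order_trans by blast+
  moreover have "0 < \<xi>"
    using \<open>0 \<le> \<epsilon>\<mu>\<close> assms(8) by linarith
  ultimately have \<mu>_le: "2 * \<epsilon>\<mu> / \<xi> \<le> 2 * (\<epsilon>\<mu> + \<epsilon>\<nu>) / \<xi>"
    and \<nu>_le: "2 * \<epsilon>\<nu> / \<xi> \<le> 2 * (\<epsilon>\<mu> + \<epsilon>\<nu>) / \<xi>"
    by (simp_all add: divide_right_mono)
  show ?thesis
  proof (cases "i \<le> m - 1")
    case True
    then have "i + 1 \<in> {1..m}"
      using assms(1) by simp
    from abs_ln_ratio_diff_le[OF this assms(4,6,8)] show ?thesis
      using True \<mu>_le by (simp add: yvec_def)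
  next
    case False
    then have "i - (m - 1) + 1 \<in> {1..n}"
      using assms(3) by simp
    from abs_ln_ratio_diff_le[OF this assms(5,7,9)] show ?thesis
      using False \<nu>_le by (simp add: yvec_def)
  qed
qed

lemma sqrt_sum_squares_le:
  fixes g :: "nat \<Rightarrow> real"
  assumes "\<forall>i\<in>{1..r}. \<bar>g i\<bar> \<le> K"
  shows "sqrt (\<Sum>i\<in>{1..r}. (g i)\<^sup>2) \<le> sqrt (real r) * K"
proof (cases "r = 0")
  case False
  then have "0 \<le> K"
    using assms[rule_format, of 1] by force
  have "(\<Sum>i\<in>{1..r}. (g i)\<^sup>2) \<le> (\<Sum>i\<in>{1..r}. K\<^sup>2)"
    using assms \<open>0 \<le> K\<close> by (intro sum_mono) (simp add: abs_le_square_iff[symmetric])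
  then have "sqrt (\<Sum>i\<in>{1..r}. (g i)\<^sup>2) \<le> sqrt (real r * K\<^sup>2)"
    by simp
  also have "\<dots> = sqrt (real r) * K"
    using \<open>0 \<le> K\<close> by (simp add: real_sqrt_mult)
  finally show ?thesis .
qed simp

lemma op_norm_rows_le:
  fixes M :: "nat \<Rightarrow> real^'d"
  assumes "\<forall>i\<in>{1..r}. norm (M i) \<le> K"
  shows "op_norm_rows r M \<le> sqrt (real r) * K"
  unfolding op_norm_rows_def
proof (rule cSUP_least)
  fix v :: "real^'d"
  assume "v \<in> cball 0 1"
  have "\<bar>M i \<bullet> v\<bar> \<le> K" if "i \<in> {1..r}" for i
  proof -
    have "\<bar>M i \<bullet> v\<bar> \<le> norm (M i) * norm v"
      by (rule Cauchy_Schwarz_ineq2)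
    also have "\<dots> \<le> K * 1"
      using assms that \<open>v \<in> cball 0 1\<close> by (intro mult_mono) (auto intro: order_trans[OF norm_ge_zero])
    finally show ?thesis
      by simp
  qed
  then show "sqrt (\<Sum>i\<in>{1..r}. (M i \<bullet> v)\<^sup>2) \<le> sqrt (real r) * K"
    by (intro sqrt_sum_squares_le) blast
qed simp

theorem lemma2:
  fixes phi :: "nat \<Rightarrow> nat \<Rightarrow> real^'d"
    and m n :: nat and L \<xi> \<epsilon>\<mu> \<epsilon>\<nu> :: real
    and \<mu>s \<nu>s \<mu>h \<nu>h :: "nat \<Rightarrow> real"
  assumes "m \<ge> 1" and "n \<ge> 1"
    and "\<forall>a\<in>{1..m}. \<forall>b\<in>{1..n}. norm (phi a b) \<le> L"
    and "is_dist m \<mu>s" and "is_dist n \<nu>s"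
    and "\<xi> > 0"
    and "\<forall>a\<in>{1..m}. \<mu>s a \<ge> \<xi>" and "\<forall>b\<in>{1..n}. \<nu>s b \<ge> \<xi>"
    and "is_dist m \<mu>h" and "is_dist n \<nu>h"
    and "l1_dist m \<mu>h \<mu>s \<le> \<epsilon>\<mu>" and "l1_dist n \<nu>h \<nu>s \<le> \<epsilon>\<nu>"
    and "\<epsilon>\<mu> < \<xi> / 2" and "\<epsilon>\<nu> < \<xi> / 2"
  shows "(op_norm_rows ((m - 1) + (n - 1))
           (\<lambda>i. Xmat phi m n \<mu>h \<nu>h i - Xmat phi m n \<mu>s \<nu>s i)
         \<le> (2 * L * sqrt (real (m + n))) * (\<epsilon>\<mu> + \<epsilon>\<nu>)) \<and>
         (vec_norm2 ((m - 1) + (n - 1)) (\<lambda>i. yvec m \<mu>h \<nu>h i - yvec m \<mu>s \<nu>s i)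
         \<le> (sqrt (8 * real (m + n)) / \<xi>) * (\<epsilon>\<mu> + \<epsilon>\<nu>))"
proof -
  let ?r = "(m - 1) + (n - 1)" and ?\<epsilon> = "\<epsilon>\<mu> + \<epsilon>\<nu>"
  note phi = assms(3) and l1 = assms(11,12)
  have "0 \<le> L"
    using phi assms(1,2) by (meson atLeastAtMost_iff le_refl norm_ge_zero order_trans)
  have "0 \<le> ?\<epsilon>"
    using l1 l1_dist_nonneg order_trans add_nonneg_nonneg by metis
  have sqrt_r: "sqrt (real ?r) \<le> sqrt (real (m + n))"
    by simp
  have "op_norm_rows ?r (\<lambda>i. Xmat phi m n \<mu>h \<nu>h i - Xmat phi m n \<mu>s \<nu>s i)
      \<le> sqrt (real ?r) * (2 * L * ?\<epsilon>)"
    using norm_Xmat_diff_le[OF assms(1,2) _ phi l1] by (intro op_norm_rows_le) blast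
  also have "\<dots> \<le> sqrt (real (m + n)) * (2 * L * ?\<epsilon>)"
    using sqrt_r \<open>0 \<le> L\<close> \<open>0 \<le> ?\<epsilon>\<close> by (intro mult_right_mono) simp_all
  finally have X: "op_norm_rows ?r (\<lambda>i. Xmat phi m n \<mu>h \<nu>h i - Xmat phi m n \<mu>s \<nu>s i)
      \<le> (2 * L * sqrt (real (m + n))) * ?\<epsilon>"
    by (simp only: mult_ac)
  have "vec_norm2 ?r (\<lambda>i. yvec m \<mu>h \<nu>h i - yvec m \<mu>s \<nu>s i)
      \<le> sqrt (real ?r) * (2 * ?\<epsilon> / \<xi>)"
    unfolding vec_norm2_def
    using abs_yvec_diff_le[OF assms(1,2) _ assms(7,8) l1 assms(13,14)]
    by (intro sqrt_sum_squares_le) blast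
  also have "\<dots> \<le> sqrt (real (m + n)) * (2 * ?\<epsilon> / \<xi>)"
    using sqrt_r \<open>0 \<le> ?\<epsilon>\<close> \<open>\<xi> > 0\<close> by (intro mult_right_mono) simp_all
  also have "\<dots> = (2 * sqrt (real (m + n))) * (?\<epsilon> / \<xi>)"
    by simp
  also have "\<dots> \<le> sqrt (8 * real (m + n)) * (?\<epsilon> / \<xi>)"
    using real_sqrt_le_mono[of 4 8] \<open>0 \<le> ?\<epsilon>\<close> \<open>\<xi> > 0\<close> unfolding real_sqrt_mult[of 8]
    by (intro mult_right_mono) auto
  finally show ?thesis
    using X by simp
qed

end
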